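(* The map $\phi_s : \mathbf{ASM} \to \mathbb{K}(q)$ linearly defined, for any $s \in \{\operatorname{io}, \operatorname{oi}\}$ and any ASM $\delta$ of size $n$ by $\phi_s(\mathbf{F}_{M^\delta}) := \frac{q^{s(\delta)}}{n!}$ is an algebra morphism.
   Context: Let $\mathbb{K}$ be a field of characteristic zero. An alternating sign matrix (ASM) of size $n$ is an $n\times n$ matrix with entries in $\{0,+,-\}$ such that every row and column starts and ends (ignoring zeros) with $+$ and in each row and column the $+$ and $-$ alternate. For an ASM $\delta$, $M^\delta$ is the $\{0,1\}$-matrix with $M^\delta_{ij}=1$ iff $\delta_{ij}\ne 0$. $\mathbf{PM}_1$ is the Hopf algebra with basis $(\mathbf{F}_M)$ indexed by $\{0,1\}$-square matrices with no null row or column, with product $\mathbf{F}_{M_1}\cdot\mathbf{F}_{M_2} = \sum \mathbf{F}_M$ over all $M$ obtained by shuffling the columns of $M_1$ (with an $n_2\times n_1$ zero block placed below) with the columns of $M_2$ (with an $n_1 \times n_2$ zero block placed above), $n_i$ the sizes. $\mathbf{ASM}$ is the Hopf subalgebra of $\mathbf{PM}_1$ spanned by the $\mathbf{F}_{M^\delta}$, graded by the size of $\delta$. Via the bijection between ASMs and six-vertex configurations with domain wall boundary conditions, a $+$ entry corresponds to a vertex of type $\operatorname{oi}$ and a $-$ entry to a vertex of type $\operatorname{io}$; thus $\operatorname{oi}(\delta)$ is the number of $+$ entries of $\delta$ and $\operatorname{io}(\delta)$ is the number of $-$ entries of $\delta$. *)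

theory Defs
  imports Main "HOL-Computational_Algebra.Polynomial" "HOL-Computational_Algebra.Fraction_Field"
begin

text \<open>Square matrices are pairs (size n, entry function); entries outside [0,n)x[0,n) are 0/False.\<close>

type_synonym pmat = "nat \<times> (nat \<Rightarrow> nat \<Rightarrow> bool)"
type_synonym sgnmat = "nat \<times> (nat \<Rightarrow> nat \<Rightarrow> int)"   \<comment> \<open>{0,+,-}-matrices, + = 1, - = -1\<close>

definition alternating_pm :: "int list \<Rightarrow> bool" where
  "alternating_pm xs \<longleftrightarrow> odd (length xs) \<and> (\<forall>k<length xs. xs ! k = (-1) ^ k)"

definition row_nonzeros :: "sgnmat \<Rightarrow> nat \<Rightarrow> int list" where
  "row_nonzeros \<delta> i = filter (\<lambda>x. x \<noteq> 0) (map (\<lambda>j. snd \<delta> i j) [0..<fst \<delta>])"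

definition col_nonzeros :: "sgnmat \<Rightarrow> nat \<Rightarrow> int list" where
  "col_nonzeros \<delta> j = filter (\<lambda>x. x \<noteq> 0) (map (\<lambda>i. snd \<delta> i j) [0..<fst \<delta>])"

definition is_asm :: "sgnmat \<Rightarrow> bool" where
  "is_asm \<delta> \<longleftrightarrow>
     (\<forall>i j. snd \<delta> i j \<in> {-1, 0, 1}) \<and>
     (\<forall>i j. (fst \<delta> \<le> i \<or> fst \<delta> \<le> j) \<longrightarrow> snd \<delta> i j = 0) \<and>
     (\<forall>i<fst \<delta>. alternating_pm (row_nonzeros \<delta> i)) \<and>
     (\<forall>j<fst \<delta>. alternating_pm (col_nonzeros \<delta> j))"

definition Mof :: "sgnmat \<Rightarrow> pmat" where
  "Mof \<delta> = (fst \<delta>, \<lambda>i j. snd \<delta> i j \<noteq> 0)"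

definition oi :: "sgnmat \<Rightarrow> nat" where
  "oi \<delta> = card {(i, j). i < fst \<delta> \<and> j < fst \<delta> \<and> snd \<delta> i j = 1}"

definition io :: "sgnmat \<Rightarrow> nat" where
  "io \<delta> = card {(i, j). i < fst \<delta> \<and> j < fst \<delta> \<and> snd \<delta> i j = -1}"

text \<open>Column shuffle of M1 (size n1, with zero block below) and M2 (size n2, with zero
  block above): S is the set of column positions receiving the columns of M1 (in order).\<close>
definition shuffle_cols :: "pmat \<Rightarrow> pmat \<Rightarrow> nat set \<Rightarrow> pmat" where
  "shuffle_cols A B S =
     (let n1 = fst A; n2 = fst B; N = n1 + n2 in
      (N, \<lambda>i c. i < N \<and> c < N \<and>
         (if c \<in> S then i < n1 \<and> snd A i (card {x\<in>S. x < c})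
          else n1 \<le> i \<and> snd B (i - n1) (card {x\<in>{..<N} - S. x < c}))))"

text \<open>Product of basis elements F_A . F_B of PM_1, as a multiset of basis matrices.\<close>
definition pm_prod :: "pmat \<Rightarrow> pmat \<Rightarrow> pmat multiset" where
  "pm_prod A B = image_mset (shuffle_cols A B)
      (mset_set {S. S \<subseteq> {..<fst A + fst B} \<and> card S = fst A})"

text \<open>Elements of PM_1 over K: finitely supported coefficient functions on matrices.\<close>
definition supp :: "(pmat \<Rightarrow> 'a::zero) \<Rightarrow> pmat set" where
  "supp x = {M. x M \<noteq> 0}"

definition pm_mult :: "(pmat \<Rightarrow> 'a::comm_ring_1) \<Rightarrow> (pmat \<Rightarrow> 'a) \<Rightarrow> (pmat \<Rightarrow> 'a)" where
  "pm_mult x y = (\<lambda>M. \<Sum>A\<in>supp x. \<Sum>B\<in>supp y. x A * y B * of_nat (count (pm_prod A B) M))"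

definition pm_one :: "pmat \<Rightarrow> 'a::comm_ring_1" where
  "pm_one = (\<lambda>M. if M = (0, \<lambda>i j. False) then 1 else 0)"

definition in_ASM :: "(pmat \<Rightarrow> 'a::zero) \<Rightarrow> bool" where
  "in_ASM x \<longleftrightarrow> finite (supp x) \<and> supp x \<subseteq> Mof ` {\<delta>. is_asm \<delta>}"

definition qvar :: "'a::field poly fract" where
  "qvar = Fract [:0, 1:] 1"

definition const :: "'a::field \<Rightarrow> 'a poly fract" where
  "const c = Fract [:c:] 1"

definition phi :: "(sgnmat \<Rightarrow> nat) \<Rightarrow> (pmat \<Rightarrow> 'a::field) \<Rightarrow> 'a poly fract" where
  "phi s x = (\<Sum>\<delta>\<in>{\<delta>. is_asm \<delta> \<and> x (Mof \<delta>) \<noteq> 0}.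
                const (x (Mof \<delta>)) * qvar ^ s \<delta> / of_nat (fact (fst \<delta>)))"

end

theory Submission
  imports Defs
begin

text \<open>
  An ASM is determined by its support, since the nonzero entries of each row alternate
  \<open>+, -, +, \<dots>\<close>; so \<open>\<phi>\<^sub>s\<close> is well defined, and it is linear by construction.
  For ASMs \<open>\<delta>\<close>, \<open>\<epsilon>\<close> of sizes \<open>n\<close>, \<open>m\<close>, each of the \<open>(n + m choose n)\<close> column shuffles of
  \<open>M\<^sup>\<delta>\<close> and \<open>M\<^sup>\<epsilon>\<close> is the support of the same shuffle of \<open>\<delta>\<close> and \<open>\<epsilon>\<close> themselves,
  which is again an ASM carrying exactly the \<open>+\<close> and \<open>-\<close> entries of \<open>\<delta>\<close> and \<open>\<epsilon>\<close>.
  Hence the product of the basis elements is sent to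
  \<open>(n + m choose n) q\<^bsup>s \<delta> + s \<epsilon>\<^esup> / (n + m)! = q\<^bsup>s \<delta>\<^esup> / n! \<cdot> q\<^bsup>s \<epsilon>\<^esup> / m!\<close>.
\<close>

instance fract :: ("{idom, ring_char_0}") field_char_0
  by intro_classes (auto intro!: injI simp: of_nat_fract eq_fract)

lemma binomial_mult_power_div_fact:
  fixes x :: "'a::field_char_0"
  shows "of_nat (m + n choose m) * (x ^ (a + b) / of_nat (fact (m + n)))
       = x ^ a / of_nat (fact m) * (x ^ b / of_nat (fact n))"
  using binomial_fact[of m "m + n", where ?'a = 'a] by (simp add: power_add)

lemma const_add: "const (a + b) = const a + const (b :: 'a::field)"
  by (simp add: const_def)

lemma const_mult: "const (a * b) = const a * const (b :: 'a::field)"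
  by (simp add: const_def mult_ac)

lemma const_zero: "const (0 :: 'a::field) = 0"
  by (simp add: const_def Zero_fract_def)

lemma const_one: "const (1 :: 'a::field) = 1"
  by (simp add: const_def One_fract_def pCons_one)

lemma const_of_nat: "const (of_nat n :: 'a::field) = of_nat n"
  by (induction n) (simp_all add: const_zero const_add const_one)

lemma const_sum: "const (sum f A) = (\<Sum>x\<in>A. const (f x :: 'a::field))"
  by (induction A rule: infinite_finite_induct) (simp_all add: const_zero const_add)

lemma sum_count_eq_sum_mset:
  fixes g :: "'b \<Rightarrow> 'c::comm_semiring_1"
  assumes "finite T" "set_mset X \<subseteq> T"
  shows "(\<Sum>M\<in>T. of_nat (count X M) * g M) = sum_mset (image_mset g X)"
  using assms(2)
proof (induction X)
  case empty
  then show ?case by simp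
next
  case (add a X)
  have "(\<Sum>M\<in>T. of_nat (count (add_mset a X) M) * g M)
      = (\<Sum>M\<in>T. of_nat (count X M) * g M) + (\<Sum>M\<in>T. if M = a then g M else 0)"
    unfolding sum.distrib[symmetric] by (rule sum.cong) (auto simp: algebra_simps)
  also have "(\<Sum>M\<in>T. if M = a then g M else 0) = g a"
    using add.prems assms(1) by simp
  finally show ?case using add by (simp add: add.commute)
qed

definition rank :: "nat set \<Rightarrow> nat \<Rightarrow> nat" where
  "rank S c = card {x\<in>S. x < c}"

lemma bij_betw_rank:
  assumes "finite S"
  shows "bij_betw (rank S) S {..<card S}"
proof -
  have less: "rank S c < rank S d" if "c \<in> S" "d \<in> S" "c < d" for c d
    unfolding rank_def by (rule psubset_card_mono) (use assms that in auto)
  have inj: "inj_on (rank S) S"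
    by (rule inj_onI) (metis less less_irrefl linorder_neqE_nat)
  have "rank S c < card S" if "c \<in> S" for c
    unfolding rank_def by (rule psubset_card_mono) (use assms that in auto)
  then have "rank S ` S \<subseteq> {..<card S}" by auto
  moreover have "card (rank S ` S) = card {..<card S}"
    using card_image[OF inj] by simp
  ultimately show ?thesis
    using inj by (simp add: bij_betw_def card_subset_eq)
qed

lemma filter_nonzero_spread:
  fixes f :: "nat \<Rightarrow> int"
  assumes "S \<subseteq> {..<N}"
  shows "filter (\<lambda>x. x \<noteq> 0) (map (\<lambda>c. if c \<in> S then f (rank S c) else 0) [0..<N])
       = filter (\<lambda>x. x \<noteq> 0) (map f [0..<card S])"
  using assms
proof (induction N arbitrary: S)
  case 0
  then show ?case by simp
next
  case (Suc N)
  show ?case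
  proof (cases "N \<in> S")
    case True
    define S' where "S' = S - {N}"
    have S': "S' \<subseteq> {..<N}" using Suc.prems by (auto simp: S'_def)
    have spread: "map (\<lambda>c. if c \<in> S then f (rank S c) else 0) [0..<N]
        = map (\<lambda>c. if c \<in> S' then f (rank S' c) else 0) [0..<N]"
    proof (rule map_cong[OF refl])
      fix c assume "c \<in> set [0..<N]"
      then have "{x\<in>S. x < c} = {x\<in>S'. x < c}" "c \<in> S \<longleftrightarrow> c \<in> S'"
        by (auto simp: S'_def)
      then show "(if c \<in> S then f (rank S c) else 0) = (if c \<in> S' then f (rank S' c) else 0)"
        by (simp add: rank_def)
    qed
    have rank: "rank S N = card S'"
      unfolding rank_def using Suc.prems by (intro arg_cong[where f = card]) (auto simp: S'_def)
    have card: "card S = Suc (card S')"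
      using True Suc.prems finite_subset unfolding S'_def by (metis card_Suc_Diff1 finite_lessThan)
    show ?thesis using Suc.IH[OF S'] True by (simp add: spread rank card)
  next
    case False
    then have "S \<subseteq> {..<N}" using Suc.prems by (auto simp: less_Suc_eq)
    then show ?thesis using Suc.IH False by simp
  qed
qed

lemma nth_filter_nonzero_upt:
  fixes f :: "nat \<Rightarrow> int"
  assumes "j < n" "f j \<noteq> 0"
  shows "length (filter (\<lambda>x. x \<noteq> 0) (map f [0..<j])) < length (filter (\<lambda>x. x \<noteq> 0) (map f [0..<n]))"
    and "filter (\<lambda>x. x \<noteq> 0) (map f [0..<n]) ! length (filter (\<lambda>x. x \<noteq> 0) (map f [0..<j])) = f j"
proof -
  have "[0..<n] = [0..<j] @ j # [Suc j..<n]"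
    using assms(1) upt_add_eq_append[of 0 j "n - j"] upt_conv_Cons[of j n] by simp
  then show "length (filter (\<lambda>x. x \<noteq> 0) (map f [0..<j])) < length (filter (\<lambda>x. x \<noteq> 0) (map f [0..<n]))"
    and "filter (\<lambda>x. x \<noteq> 0) (map f [0..<n]) ! length (filter (\<lambda>x. x \<noteq> 0) (map f [0..<j])) = f j"
    using assms(2) by (simp_all add: nth_append)
qed

lemma asm_entry_eq_sign:
  assumes "is_asm d" "i < fst d" "j < fst d" "snd d i j \<noteq> 0"
  shows "snd d i j = (-1) ^ length (filter (\<lambda>j'. snd d i j' \<noteq> 0) [0..<j])"
proof -
  have "length (filter (\<lambda>j'. snd d i j' \<noteq> 0) [0..<j])
      = length (filter (\<lambda>x. x \<noteq> 0) (map (snd d i) [0..<j]))"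
    by (simp add: filter_map o_def)
  moreover have "alternating_pm (row_nonzeros d i)"
    using assms(1,2) by (simp add: is_asm_def)
  ultimately show ?thesis
    using nth_filter_nonzero_upt[of j "fst d" "snd d i"] assms(3,4)
    unfolding row_nonzeros_def alternating_pm_def by auto
qed

lemma inj_on_Mof_asm: "inj_on Mof (Collect is_asm)"
proof (rule inj_onI)
  fix d e assume "d \<in> Collect is_asm" "e \<in> Collect is_asm" and eq: "Mof d = Mof e"
  then have d: "is_asm d" and e: "is_asm e" by auto
  have size: "fst d = fst e" using eq by (simp add: Mof_def)
  have nz: "snd d i j \<noteq> 0 \<longleftrightarrow> snd e i j \<noteq> 0" for i j
    using eq by (simp add: Mof_def fun_eq_iff)
  have "snd d i j = snd e i j" for i j
  proof (cases "i < fst d \<and> j < fst d \<and> snd d i j \<noteq> 0")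
    case True
    have "filter (\<lambda>j'. snd d i j' \<noteq> 0) [0..<j] = filter (\<lambda>j'. snd e i j' \<noteq> 0) [0..<j]"
      using nz by (intro filter_cong) auto
    then show ?thesis
      using True asm_entry_eq_sign[OF d, of i j] asm_entry_eq_sign[OF e, of i j] nz[of i j] size
      by simp
  next
    case False
    then show ?thesis
      using d e size nz[of i j] unfolding is_asm_def by (metis not_le)
  qed
  then show "d = e" using size by (simp add: prod_eq_iff fun_eq_iff)
qed

lemma card_lessThan_Diff:
  assumes "S \<subseteq> {..<n + m}" "card S = n"
  shows "card ({..<n + m} - S) = m"
  using assms finite_subset[OF assms(1)] by (simp add: card_Diff_subset)

definition signed_shuffle :: "sgnmat \<Rightarrow> sgnmat \<Rightarrow> nat set \<Rightarrow> sgnmat" where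
  "signed_shuffle d e S = (fst d + fst e, \<lambda>i c.
     if i < fst d + fst e \<and> c < fst d + fst e then
       (if c \<in> S then (if i < fst d then snd d i (rank S c) else 0)
        else (if fst d \<le> i then snd e (i - fst d) (rank ({..<fst d + fst e} - S) c) else 0))
     else 0)"

lemma fst_signed_shuffle [simp]: "fst (signed_shuffle d e S) = fst d + fst e"
  by (simp add: signed_shuffle_def)

lemma Mof_signed_shuffle: "Mof (signed_shuffle d e S) = shuffle_cols (Mof d) (Mof e) S"
  unfolding Mof_def signed_shuffle_def shuffle_cols_def Let_def rank_def by (auto simp: fun_eq_iff)

lemma row_nonzeros_signed_shuffle:
  assumes S: "S \<subseteq> {..<fst d + fst e}" "card S = fst d" and i: "i < fst d + fst e"
  shows "row_nonzeros (signed_shuffle d e S) i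
       = (if i < fst d then row_nonzeros d i else row_nonzeros e (i - fst d))"
proof -
  define T where "T = {..<fst d + fst e} - S"
  have T: "T \<subseteq> {..<fst d + fst e}" "card T = fst e"
    using card_lessThan_Diff[OF S] by (auto simp: T_def)
  have row: "row_nonzeros (signed_shuffle d e S) i = filter (\<lambda>x. x \<noteq> 0)
      (map (\<lambda>c. if i < fst d then (if c \<in> S then snd d i (rank S c) else 0)
                else (if c \<in> T then snd e (i - fst d) (rank T c) else 0)) [0..<fst d + fst e])"
    unfolding row_nonzeros_def
    by (intro arg_cong[where f = "filter _"] map_cong) (auto simp: signed_shuffle_def T_def i)
  show ?thesis
  proof (cases "i < fst d")
    case True
    then show ?thesis
      unfolding row using filter_nonzero_spread[OF S(1)] S(2) by (simp add: row_nonzeros_def)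
  next
    case False
    then show ?thesis
      unfolding row using filter_nonzero_spread[OF T(1)] T(2) by (simp add: row_nonzeros_def)
  qed
qed

lemma col_nonzeros_signed_shuffle:
  assumes c: "c < fst d + fst e"
  shows "col_nonzeros (signed_shuffle d e S) c
       = (if c \<in> S then col_nonzeros d (rank S c)
          else col_nonzeros e (rank ({..<fst d + fst e} - S) c))"
proof -
  define T where "T = {..<fst d + fst e} - S"
  have upt: "[0..<fst d + fst e] = [0..<fst d] @ map (\<lambda>i. i + fst d) [0..<fst e]"
    using upt_add_eq_append[of 0 "fst d" "fst e"] by (simp add: map_add_upt add.commute)
  have "map (\<lambda>i. snd (signed_shuffle d e S) i c) [0..<fst d + fst e]
      = map (\<lambda>i. if c \<in> S then snd d i (rank S c) else 0) [0..<fst d]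
        @ map (\<lambda>i. if c \<in> S then 0 else snd e i (rank T c)) [0..<fst e]"
    unfolding upt map_append map_map
    by (intro arg_cong2[where f = "(@)"] map_cong) (auto simp: signed_shuffle_def c T_def)
  then show ?thesis
    by (simp add: col_nonzeros_def filter_map o_def T_def)
qed

lemma is_asm_signed_shuffle:
  assumes d: "is_asm d" and e: "is_asm e" and S: "S \<subseteq> {..<fst d + fst e}" "card S = fst d"
  shows "is_asm (signed_shuffle d e S)"
proof -
  define T where "T = {..<fst d + fst e} - S"
  have T: "finite T" "card T = fst e"
    using card_lessThan_Diff[OF S] by (auto simp: T_def)
  have rank_S: "rank S c < fst d" if "c \<in> S" for c
    using bij_betw_apply[OF bij_betw_rank that] S finite_subset by auto
  have rank_T: "rank T c < fst e" if "c \<in> T" for c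
    using bij_betw_apply[OF bij_betw_rank[OF T(1)] that] T(2) by simp
  have "alternating_pm (row_nonzeros (signed_shuffle d e S) i)" if "i < fst d + fst e" for i
    using d e that row_nonzeros_signed_shuffle[OF S that] unfolding is_asm_def by auto
  moreover have "alternating_pm (col_nonzeros (signed_shuffle d e S) c)" if c: "c < fst d + fst e" for c
    using d e rank_S rank_T[unfolded T_def] c col_nonzeros_signed_shuffle[OF c]
    unfolding is_asm_def by auto
  moreover have "snd d i j \<in> {-1, 0, 1}" "snd e i j \<in> {-1, 0, 1}" for i j
    using d e unfolding is_asm_def by auto
  ultimately show ?thesis
    unfolding is_asm_def by (auto simp: signed_shuffle_def)
qed

definition entry_count :: "int \<Rightarrow> sgnmat \<Rightarrow> nat" where
  "entry_count v d = card {(i, j). i < fst d \<and> j < fst d \<and> snd d i j = v}"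

lemma io_eq_entry_count: "io = entry_count (-1)"
  and oi_eq_entry_count: "oi = entry_count 1"
  by (auto simp: fun_eq_iff io_def oi_def entry_count_def)

lemma card_block_entries:
  fixes v :: int and F G :: "nat \<Rightarrow> nat \<Rightarrow> int"
  assumes v: "v \<noteq> 0" and r: "bij_betw r S' {..<m}" and S': "S' \<subseteq> {..<N}" and km: "k + m \<le> N"
    and G: "\<And>i c. i < N \<Longrightarrow> c \<in> S' \<Longrightarrow> G i c = (if k \<le> i \<and> i < k + m then F (i - k) (r c) else 0)"
  shows "card {(i, c). i < N \<and> c < N \<and> c \<in> S' \<and> G i c = v} = card {(i, j). i < m \<and> j < m \<and> F i j = v}"
proof (rule bij_betw_same_card[of "\<lambda>(i, c). (i - k, r c)"], rule bij_betw_imageI)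
  let ?P = "{(i, c). i < N \<and> c < N \<and> c \<in> S' \<and> G i c = v}"
  have inj: "inj_on r S'" and img: "r ` S' = {..<m}"
    using r by (auto simp: bij_betw_def)
  have mem: "k \<le> i \<and> i < k + m \<and> F (i - k) (r c) = v" if "(i, c) \<in> ?P" for i c
  proof -
    from that have "i < N" "c \<in> S'" "G i c = v" by auto
    with G[of i c] v show ?thesis by (auto split: if_splits)
  qed
  show "inj_on (\<lambda>(i, c). (i - k, r c)) ?P"
  proof (rule inj_onI)
    fix x y assume xy: "x \<in> ?P" "y \<in> ?P" "(\<lambda>(i, c). (i - k, r c)) x = (\<lambda>(i, c). (i - k, r c)) y"
    obtain i c i' c' where x: "x = (i, c)" and y: "y = (i', c')" by fastforce
    have "k \<le> i" "k \<le> i'" "i - k = i' - k"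
      using mem[of i c] mem[of i' c'] xy x y by auto
    moreover have "c = c'"
      using xy x y inj by (auto dest: inj_onD)
    ultimately show "x = y" using x y by simp
  qed
  show "(\<lambda>(i, c). (i - k, r c)) ` ?P = {(i, j). i < m \<and> j < m \<and> F i j = v}"
  proof (intro equalityI subsetI)
    fix y assume "y \<in> (\<lambda>(i, c). (i - k, r c)) ` ?P"
    then obtain i c where ic: "(i, c) \<in> ?P" and y: "y = (i - k, r c)" by auto
    then have "r c < m" using img by auto
    then show "y \<in> {(i, j). i < m \<and> j < m \<and> F i j = v}"
      using mem[OF ic] y by auto
  next
    fix y assume "y \<in> {(i, j). i < m \<and> j < m \<and> F i j = v}"
    then obtain a j where a: "a < m" "j < m" "F a j = v" and y: "y = (a, j)" by auto
    then obtain c where c: "c \<in> S'" "r c = j" using img by (metis imageE lessThan_iff)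
    then have "(a + k, c) \<in> ?P"
      using G[of "a + k" c] S' a km by auto
    then show "y \<in> (\<lambda>(i, c). (i - k, r c)) ` ?P"
      using c y by (auto intro: image_eqI[where x = "(a + k, c)"])
  qed
qed

lemma entry_count_signed_shuffle:
  assumes v: "v \<noteq> 0" and S: "S \<subseteq> {..<fst d + fst e}" "card S = fst d"
  shows "entry_count v (signed_shuffle d e S) = entry_count v d + entry_count v e"
proof -
  define N where "N = fst d + fst e"
  define T where "T = {..<N} - S"
  have T: "T \<subseteq> {..<N}" "finite T" "card T = fst e"
    using card_lessThan_Diff[OF S] by (auto simp: T_def N_def)
  let ?g = "snd (signed_shuffle d e S)"
  let ?E = "\<lambda>C. {(i, c). i < N \<and> c < N \<and> c \<in> C \<and> ?g i c = v}"
  have "{(i, c). i < N \<and> c < N \<and> ?g i c = v} = ?E S \<union> ?E T"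
    by (auto simp: T_def)
  moreover have "finite (?E C)" for C
    by (rule finite_subset[of _ "{..<N} \<times> {..<N}"]) auto
  moreover have "?E S \<inter> ?E T = {}"
    by (auto simp: T_def)
  moreover have "card (?E S) = entry_count v d"
    unfolding entry_count_def
    by (rule card_block_entries[where k = 0 and F = "snd d" and r = "rank S"])
       (use v S bij_betw_rank[of S] finite_subset in \<open>auto simp: N_def signed_shuffle_def\<close>)
  moreover have "card (?E T) = entry_count v e"
    unfolding entry_count_def
    by (rule card_block_entries[where k = "fst d" and F = "snd e" and r = "rank T"])
       (use v T bij_betw_rank[of T] in \<open>auto simp: N_def signed_shuffle_def T_def\<close>)
  ultimately show ?thesis
    by (simp add: entry_count_def signed_shuffle_def N_def card_Un_disjoint)
qed

lemma pm_prod_Mof: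
  "pm_prod (Mof d) (Mof e) = image_mset (\<lambda>S. Mof (signed_shuffle d e S))
     (mset_set {S. S \<subseteq> {..<fst d + fst e} \<and> card S = fst d})"
  by (simp add: pm_prod_def Mof_signed_shuffle) (simp add: Mof_def)

lemma finite_subsets_card: "finite {S. S \<subseteq> {..<n :: nat} \<and> card S = k}"
  by (rule finite_subset[of _ "Pow {..<n}"]) auto

lemma set_pm_prod_asm:
  assumes "is_asm d" "is_asm e"
  shows "set_mset (pm_prod (Mof d) (Mof e)) \<subseteq> Mof ` Collect is_asm"
  using is_asm_signed_shuffle[OF assms] by (auto simp: pm_prod_Mof finite_subsets_card)

definition asm_weight :: "(sgnmat \<Rightarrow> nat) \<Rightarrow> sgnmat \<Rightarrow> 'a::field poly fract" where
  "asm_weight s d = qvar ^ s d / of_nat (fact (fst d))"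

text \<open>Only meaningful on supports of ASMs, where \<open>inv_into\<close> recovers the ASM by
  \<open>inj_on_Mof_asm\<close>.\<close>

definition basis_weight :: "(sgnmat \<Rightarrow> nat) \<Rightarrow> pmat \<Rightarrow> 'a::field poly fract" where
  "basis_weight s M = asm_weight s (inv_into (Collect is_asm) Mof M)"

lemma basis_weight_Mof: "is_asm d \<Longrightarrow> basis_weight s (Mof d) = asm_weight s d"
  unfolding basis_weight_def by (subst inv_into_f_f[OF inj_on_Mof_asm]) auto

lemma phi_eq_sum_basis_weight:
  fixes x :: "pmat \<Rightarrow> 'a::field"
  assumes T: "finite T" "T \<subseteq> Mof ` Collect is_asm" "supp x \<subseteq> T"
  shows "phi s x = (\<Sum>M\<in>T. const (x M) * basis_weight s M)"
proof -
  define D where "D = {d. is_asm d \<and> x (Mof d) \<noteq> 0}"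
  have img: "Mof ` D = supp x"
    using T by (force simp: D_def supp_def)
  have inj: "inj_on Mof D"
    by (rule inj_on_subset[OF inj_on_Mof_asm]) (auto simp: D_def)
  have "phi s x = (\<Sum>d\<in>D. const (x (Mof d)) * basis_weight s (Mof d))"
    unfolding phi_def D_def[symmetric] by (rule sum.cong) (auto simp: D_def basis_weight_Mof asm_weight_def)
  also have "\<dots> = (\<Sum>M\<in>supp x. const (x M) * basis_weight s M)"
    using sum.reindex[OF inj, of "\<lambda>M. const (x M) * basis_weight s M"] img by simp
  also have "\<dots> = (\<Sum>M\<in>T. const (x M) * basis_weight s M)"
    by (rule sum.mono_neutral_left) (use T in \<open>auto simp: supp_def const_zero\<close>)
  finally show ?thesis .
qed

lemma weighted_count_pm_prod:
  assumes s: "s = io \<or> s = oi" and d: "is_asm d" and e: "is_asm e"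
    and T: "finite T" "set_mset (pm_prod (Mof d) (Mof e)) \<subseteq> T"
  shows "(\<Sum>M\<in>T. of_nat (count (pm_prod (Mof d) (Mof e)) M) * basis_weight s M)
       = basis_weight s (Mof d) * (basis_weight s (Mof e) :: 'a::field_char_0 poly fract)"
proof -
  define \<S> where "\<S> = {S. S \<subseteq> {..<fst d + fst e} \<and> card S = fst d}"
  have card_shuffles: "card \<S> = fst d + fst e choose fst d"
    by (simp add: \<S>_def n_subsets)
  have weight_shuffle: "basis_weight s (Mof (signed_shuffle d e S))
      = (qvar ^ (s d + s e) / of_nat (fact (fst d + fst e)) :: 'a poly fract)" if "S \<in> \<S>" for S
  proof -
    have "s (signed_shuffle d e S) = s d + s e"
      using s that entry_count_signed_shuffle[of _ S d e]
      by (auto simp: \<S>_def io_eq_entry_count oi_eq_entry_count)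
    then show ?thesis
      using that is_asm_signed_shuffle[OF d e]
      by (simp add: \<S>_def basis_weight_Mof asm_weight_def signed_shuffle_def)
  qed
  have "(\<Sum>M\<in>T. of_nat (count (pm_prod (Mof d) (Mof e)) M) * basis_weight s M)
      = sum_mset (image_mset (basis_weight s) (pm_prod (Mof d) (Mof e)))"
    by (rule sum_count_eq_sum_mset[OF T])
  also have "\<dots> = (\<Sum>S\<in>\<S>. basis_weight s (Mof (signed_shuffle d e S)) :: 'a poly fract)"
    unfolding pm_prod_Mof \<S>_def[symmetric] image_mset.compositionality
      sum_unfold_sum_mset[of "\<lambda>S. basis_weight s (Mof (signed_shuffle d e S))"]
    by (simp add: o_def)
  also have "\<dots> = of_nat (card \<S>) * (qvar ^ (s d + s e) / of_nat (fact (fst d + fst e)))"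
    using weight_shuffle by simp
  also have "\<dots> = asm_weight s d * asm_weight s e"
    unfolding card_shuffles asm_weight_def by (rule binomial_mult_power_div_fact)
  also have "\<dots> = basis_weight s (Mof d) * basis_weight s (Mof e)"
    by (simp add: basis_weight_Mof d e)
  finally show ?thesis .
qed

lemma supp_pm_mult_subset:
  "supp (pm_mult x y) \<subseteq> (\<Union>A\<in>supp x. \<Union>B\<in>supp y. set_mset (pm_prod A B))"
proof
  fix M assume "M \<in> supp (pm_mult x y)"
  then have "(\<Sum>A\<in>supp x. \<Sum>B\<in>supp y. x A * y B * of_nat (count (pm_prod A B) M)) \<noteq> 0"
    by (simp add: supp_def pm_mult_def)
  then obtain A B where "A \<in> supp x" "B \<in> supp y" "count (pm_prod A B) M \<noteq> 0"
    by (metis (no_types, lifting) mult_zero_right of_nat_0 sum.neutral)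
  then show "M \<in> (\<Union>A\<in>supp x. \<Union>B\<in>supp y. set_mset (pm_prod A B))"
    by (auto simp: not_in_iff[symmetric])
qed

lemma phi_linear:
  fixes x y :: "pmat \<Rightarrow> 'a::field"
  assumes x: "in_ASM x" and y: "in_ASM y"
  shows "phi s (\<lambda>M. a * x M + b * y M) = const a * phi s x + const b * phi s y"
proof -
  let ?T = "supp x \<union> supp y"
  have T: "finite ?T" "?T \<subseteq> Mof ` Collect is_asm"
    using x y by (auto simp: in_ASM_def)
  have "supp (\<lambda>M. a * x M + b * y M) \<subseteq> ?T"
    by (auto simp: supp_def)
  then show ?thesis
    using phi_eq_sum_basis_weight[OF T, of x s] phi_eq_sum_basis_weight[OF T, of y s]
    by (simp add: phi_eq_sum_basis_weight[OF T] const_add const_mult sum.distrib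
        sum_distrib_left algebra_simps)
qed

lemma phi_pm_mult:
  fixes x y :: "pmat \<Rightarrow> 'a::field_char_0"
  assumes s: "s = io \<or> s = oi" and x: "in_ASM x" and y: "in_ASM y"
  shows "phi s (pm_mult x y) = phi s x * phi s y"
proof -
  define X Y where "X = supp x" and "Y = supp y"
  have X: "finite X" "X \<subseteq> Mof ` Collect is_asm" and Y: "finite Y" "Y \<subseteq> Mof ` Collect is_asm"
    using x y by (auto simp: in_ASM_def X_def Y_def)
  define T where "T = (\<Union>A\<in>X. \<Union>B\<in>Y. set_mset (pm_prod A B))"
  have fin_T: "finite T"
    using X Y by (simp add: T_def)
  have T_asm: "T \<subseteq> Mof ` Collect is_asm"
    using X Y set_pm_prod_asm unfolding T_def by blast
  have supp_T: "supp (pm_mult x y) \<subseteq> T"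
    using supp_pm_mult_subset[of x y] by (simp add: T_def X_def Y_def)
  have weighted_count: "(\<Sum>M\<in>T. of_nat (count (pm_prod A B) M) * basis_weight s M)
      = basis_weight s A * (basis_weight s B :: 'a poly fract)" if AB: "A \<in> X" "B \<in> Y" for A B
  proof -
    obtain d e where "is_asm d" "A = Mof d" "is_asm e" "B = Mof e"
      using AB X Y by blast
    moreover have "set_mset (pm_prod A B) \<subseteq> T"
      using AB by (auto simp: T_def)
    ultimately show ?thesis
      using weighted_count_pm_prod[OF s _ _ fin_T] by blast
  qed
  have "phi s (pm_mult x y) = (\<Sum>M\<in>T. const (pm_mult x y M) * basis_weight s M)"
    by (rule phi_eq_sum_basis_weight[OF fin_T T_asm supp_T])
  also have "\<dots> = (\<Sum>A\<in>X. \<Sum>B\<in>Y. const (x A) * const (y B) *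
      (\<Sum>M\<in>T. of_nat (count (pm_prod A B) M) * basis_weight s M))"
    unfolding pm_mult_def X_def[symmetric] Y_def[symmetric]
    by (simp add: const_sum const_mult const_of_nat sum_distrib_left sum_distrib_right
        sum.swap[of _ T] mult.assoc)
  also have "\<dots> = (\<Sum>A\<in>X. \<Sum>B\<in>Y. const (x A) * const (y B) * (basis_weight s A * basis_weight s B))"
    by (intro sum.cong refl) (simp add: weighted_count)
  also have "\<dots> = (\<Sum>A\<in>X. const (x A) * basis_weight s A) * (\<Sum>B\<in>Y. const (y B) * basis_weight s B)"
    by (simp add: sum_product mult_ac)
  also have "\<dots> = phi s x * phi s y"
    using phi_eq_sum_basis_weight[OF X, of x s] phi_eq_sum_basis_weight[OF Y, of y s]
    by (simp add: X_def Y_def)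
  finally show ?thesis .
qed

lemma phi_pm_one:
  assumes "s = io \<or> s = oi"
  shows "phi s (pm_one :: pmat \<Rightarrow> 'a::field) = 1"
proof -
  define d0 :: sgnmat where "d0 = (0, \<lambda>i j. 0)"
  have d0: "is_asm d0" "Mof d0 = (0, \<lambda>i j. False)" "s d0 = 0"
    using assms by (auto simp: d0_def is_asm_def Mof_def io_def oi_def)
  have "{Mof d0} \<subseteq> Mof ` Collect is_asm"
    using d0(1) by blast
  moreover have "supp (pm_one :: pmat \<Rightarrow> 'a) \<subseteq> {Mof d0}"
    using d0(2) by (auto simp: supp_def pm_one_def)
  ultimately have "phi s (pm_one :: pmat \<Rightarrow> 'a) = (\<Sum>M\<in>{Mof d0}. const (pm_one M) * basis_weight s M)"
    by (intro phi_eq_sum_basis_weight) simp_all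
  moreover have "basis_weight s (Mof d0) = (1 :: 'a poly fract)"
    unfolding basis_weight_Mof[OF d0(1)] asm_weight_def d0(3) by (simp add: d0_def)
  moreover have "pm_one (Mof d0) = (1 :: 'a)"
    using d0(2) by (simp add: pm_one_def)
  ultimately show ?thesis
    by (simp add: const_one)
qed

theorem proposition4p3:
  fixes s :: "sgnmat \<Rightarrow> nat"
  assumes "s = io \<or> s = oi"
  shows "(\<forall>(x :: pmat \<Rightarrow> 'a::field_char_0) y a b. in_ASM x \<longrightarrow> in_ASM y \<longrightarrow>
             phi s (\<lambda>M. a * x M + b * y M) = const a * phi s x + const b * phi s y)
       \<and> (\<forall>(x :: pmat \<Rightarrow> 'a) y. in_ASM x \<longrightarrow> in_ASM y \<longrightarrow>
             phi s (pm_mult x y) = phi s x * phi s y)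
       \<and> phi s (pm_one :: pmat \<Rightarrow> 'a) = 1"
  using phi_linear phi_pm_mult[OF assms] phi_pm_one[OF assms] by blast

end
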